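(* Consider the plant $\dot x=Ax+B_1w+Bu$ with $A\mathbb{1}=0$ and $B$ of full column rank, in feedback with a state-feedback controller $u=Kx$ ($K$ a rational transfer matrix with $sI-A-BK(s)$ invertible), and let $\Phi_u(s)=K(s)(sI-A-BK(s))^{-1}$. Then $K(s)\mathbb{1}=0$ if and only if $\Phi_u(s)\mathbb{1}=0$. In particular, for the plant $\dot x=u+w$, a state-feedback controller $K$ satisfies $K\mathbb{1}=0$ iff the corresponding $\Phi_u$ satisfies $\Phi_u\mathbb{1}=0$.
   Context: $\mathbb{1}$ denotes the all-ones vector; a matrix (or transfer matrix) $M$ with $M\mathbb{1}=0$ is called relative. *)

theory Defs
  imports "HOL-Analysis.Analysis" "HOL-Computational_Algebra.Polynomial" "HOL-Computational_Algebra.Fraction_Field"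
begin

text \<open>Rational transfer functions: the field of real rational functions in the Laplace variable s.\<close>
type_synonym rfun = "real poly fract"

definition const_rf :: "real \<Rightarrow> rfun" where
  "const_rf a = Fract [:a:] 1"

definition s_rf :: rfun where
  "s_rf = Fract [:0, 1:] 1"

definition lift_mat :: "real^'c^'r \<Rightarrow> rfun^'c^'r" where
  "lift_mat M = (\<chi> i j. const_rf (M $ i $ j))"

definition ones :: "'a::one^'n" where
  "ones = (\<chi> i. 1)"

text \<open>Closed-loop map from disturbance to control input:
  Phi_u(s) = K(s) (sI - A - B K(s))^{-1}.\<close>
definition Phi_u :: "real^'n^'n \<Rightarrow> real^'m^'n \<Rightarrow> rfun^'n^'m \<Rightarrow> rfun^'n^'m" where
  "Phi_u A B K = K ** matrix_inv (mat s_rf - lift_mat A - lift_mat B ** K)"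

end

theory Submission
  imports Defs "HOL-Computational_Algebra.Polynomial_Factorial"
begin

(* Write M = sI - A - BK. If K1 = 0 then M1 = s1, because A1 = 0; hence M^-1 1 = s^-1 1 and
   Phi_u 1 = s^-1 K1 = 0. Conversely, if Phi_u 1 = K (M^-1 1) = 0, then v = M^-1 1 satisfies
   (sI - A) v = 1 = (sI - A)(s^-1 1). A constant real matrix has no eigenvalue s over the real
   rational functions: some nonzero real polynomial p annihilates A, and an eigenvector w would
   give p(s) w = p(A) w = 0. So v = s^-1 1 and K1 = s K v = 0. *)

lemma const_rf_eq_to_fract: "const_rf a = to_fract [:a:]"
  by (simp add: const_rf_def to_fract_def)

lemma s_rf_eq_to_fract: "s_rf = to_fract [:0, 1:]"
  by (simp add: s_rf_def to_fract_def)

lemma s_rf_nonzero: "s_rf \<noteq> 0"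
  by (simp add: s_rf_eq_to_fract)

lemma const_rf_0 [simp]: "const_rf 0 = 0"
  by (simp add: const_rf_eq_to_fract)

lemma const_rf_1 [simp]: "const_rf 1 = 1"
  by (simp add: const_rf_eq_to_fract flip: one_pCons)

lemma const_rf_add [simp]: "const_rf (a + b) = const_rf a + const_rf b"
  by (simp add: const_rf_eq_to_fract flip: to_fract_add)

lemma const_rf_mult [simp]: "const_rf (a * b) = const_rf a * const_rf b"
  by (simp add: const_rf_eq_to_fract flip: to_fract_mult)

lemma const_rf_sum [simp]: "const_rf (\<Sum>k\<in>S. f k) = (\<Sum>k\<in>S. const_rf (f k))"
  by (induction S rule: infinite_finite_induct) auto

lemma to_fract_power: "to_fract (x ^ k) = to_fract x ^ k"
  by (induction k) simp_all

lemma to_fract_sum: "to_fract (\<Sum>k\<in>S. f k) = (\<Sum>k\<in>S. to_fract (f k))"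
  by (induction S rule: infinite_finite_induct) auto

lemma const_rf_mult_s_rf_power: "const_rf a * s_rf ^ k = to_fract (monom a k)"
proof -
  have "monom a k = [:a:] * [:0, 1:] ^ k"
    by (simp add: monom_altdef)
  then show ?thesis
    by (simp only: const_rf_eq_to_fract s_rf_eq_to_fract to_fract_mult to_fract_power)
qed

lemma lift_mat_0 [simp]: "lift_mat 0 = 0"
  by (simp add: lift_mat_def vec_eq_iff)

lemma lift_mat_mat_1 [simp]: "lift_mat (mat 1) = mat 1"
  by (simp add: lift_mat_def mat_def vec_eq_iff)

lemma lift_mat_add [simp]: "lift_mat (X + Y) = lift_mat X + lift_mat Y"
  by (simp add: lift_mat_def vec_eq_iff)

lemma lift_mat_sum: "lift_mat (\<Sum>k\<in>S. f k) = (\<Sum>k\<in>S. lift_mat (f k))"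
  by (induction S rule: infinite_finite_induct) auto

lemma lift_mat_matrix_mult: "lift_mat (X ** Y) = lift_mat X ** lift_mat Y"
  by (simp add: lift_mat_def matrix_matrix_mult_def vec_eq_iff)

lemma lift_mat_scaleR_mult_vec: "lift_mat (c *\<^sub>R X) *v v = const_rf c *s (lift_mat X *v v)"
  by (simp add: lift_mat_def vec_eq_iff matrix_vector_mult_def sum_distrib_left mult.assoc)

lemma lift_mat_mult_ones_eq_0:
  assumes "A *v ones = 0"
  shows "lift_mat A *v (ones :: rfun^'n) = 0"
proof -
  have "(lift_mat A *v (ones :: rfun^'n)) $ i = const_rf ((A *v ones) $ i)" for i
    by (simp add: lift_mat_def matrix_vector_mult_def ones_def)
  with assms show ?thesis
    by (simp add: vec_eq_iff)
qed

lemma sum_matrix_vector_mult: "(\<Sum>k\<in>S. f k) *v v = (\<Sum>k\<in>S. f k *v v)"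
  by (induction S rule: infinite_finite_induct) (auto simp: matrix_vector_mult_add_rdistrib)

lemma sum_vector_smult: "(\<Sum>k\<in>S. c k) *s (v :: 'a::semiring_0^'n) = (\<Sum>k\<in>S. c k *s v)"
  by (induction S rule: infinite_finite_induct) (auto simp: vector_sadd_rdistrib)

lemma mat_mult_vec: "mat c *v v = c *s (v :: 'a::comm_semiring_1^'n)"
  by (simp add: vec_eq_iff matrix_vector_mult_def mat_def if_distrib if_distribR cong del: if_weak_cong)

lemma invertible_matrix_inv:
  assumes "invertible M"
  shows "M ** matrix_inv M = mat 1" and "matrix_inv M ** M = mat 1"
  using someI_ex[OF assms[unfolded invertible_def]] by (simp_all add: matrix_inv_def)

primrec matrix_pow :: "'a::semiring_1^'n^'n \<Rightarrow> nat \<Rightarrow> 'a^'n^'n" where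
  "matrix_pow M 0 = mat 1"
| "matrix_pow M (Suc k) = M ** matrix_pow M k"

lemma lift_mat_matrix_pow: "lift_mat (matrix_pow A k) = matrix_pow (lift_mat A) k"
  by (induction k) (simp_all add: lift_mat_matrix_mult)

lemma matrix_pow_eigenvector:
  fixes M :: "'a::field^'n^'n"
  assumes "M *v w = c *s w"
  shows "matrix_pow M k *v w = c ^ k *s w"
proof (induction k)
  case (Suc k)
  have "matrix_pow M (Suc k) *v w = M *v (c ^ k *s w)"
    by (simp add: Suc flip: matrix_vector_mul_assoc)
  also have "\<dots> = c ^ Suc k *s w"
    by (simp add: assms vector_scalar_commute vector_smult_assoc mult.commute)
  finally show ?case .
qed simp

lemma sequence_linearly_dependent:
  fixes f :: "nat \<Rightarrow> 'a::euclidean_space"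
  obtains c where "(\<Sum>k\<le>DIM('a). c k *\<^sub>R f k) = 0" and "\<exists>j\<le>DIM('a). c j \<noteq> 0"
proof (cases "inj_on f {..DIM('a)}")
  case True
  then have "card (f ` {..DIM('a)}) = Suc DIM('a)"
    by (simp add: card_image)
  then have "\<not> independent (f ` {..DIM('a)})"
    using independent_bound by fastforce
  then obtain u where "(\<Sum>x\<in>f ` {..DIM('a)}. u x *\<^sub>R x) = 0" and "\<exists>x\<in>f ` {..DIM('a)}. u x \<noteq> 0"
    by (auto simp: independent_explicit)
  then show ?thesis
    using that[of "u \<circ> f"] by (auto simp: sum.reindex[OF True])
next
  case False
  then obtain i j where ij: "i \<le> DIM('a)" "j \<le> DIM('a)" "i \<noteq> j" "f i = f j"
    by (auto simp: inj_on_def)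
  let ?c = "\<lambda>k. of_bool (k = i) - of_bool (k = j) :: real"
  have "?c k *\<^sub>R f k = (if k = i then f k else 0) - (if k = j then f k else 0)" for k
    by simp
  then have "(\<Sum>k\<le>DIM('a). ?c k *\<^sub>R f k) = f i - f j"
    using ij by (simp add: sum_subtractf)
  then show ?thesis
    using ij by (intro that[of ?c]) auto
qed

lemma lift_mat_eigenvector_s_rf_eq_0:
  fixes A :: "real^'n^'n"
  assumes eigen: "lift_mat A *v w = s_rf *s w"
  shows "w = 0"
proof -
  let ?N = "DIM(real^'n^'n)"
  obtain c j where annihilating: "(\<Sum>k\<le>?N. c k *\<^sub>R matrix_pow A k) = 0"
    and "j \<le> ?N" "c j \<noteq> 0"
    using sequence_linearly_dependent[of "matrix_pow A"] by blast
  define p where "p = (\<Sum>k\<le>?N. monom (c k) k)"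
  have "coeff p j = c j"
    using \<open>j \<le> ?N\<close> by (simp add: p_def coeff_sum)
  with \<open>c j \<noteq> 0\<close> have "p \<noteq> 0"
    by auto
  have "to_fract p *s w = (\<Sum>k\<le>?N. (const_rf (c k) * s_rf ^ k) *s w)"
    by (simp add: p_def to_fract_sum const_rf_mult_s_rf_power sum_vector_smult)
  also have "\<dots> = (\<Sum>k\<le>?N. lift_mat (c k *\<^sub>R matrix_pow A k) *v w)"
    by (simp add: lift_mat_scaleR_mult_vec lift_mat_matrix_pow matrix_pow_eigenvector[OF eigen]
        vector_smult_assoc)
  also have "\<dots> = 0"
    unfolding sum_matrix_vector_mult[symmetric] lift_mat_sum[symmetric] annihilating by simp
  finally show ?thesis
    using \<open>p \<noteq> 0\<close> by simp
qed

lemma Phi_u_ones_eq_0_iff: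
  fixes A :: "real^'n^'n" and B :: "real^'m^'n" and K :: "rfun^'n^'m"
  assumes A_ones: "A *v ones = 0"
    and invertible: "invertible (mat s_rf - lift_mat A - lift_mat B ** K)"
  shows "K *v ones = 0 \<longleftrightarrow> Phi_u A B K *v ones = 0"
proof -
  define M where "M = mat s_rf - lift_mat A - lift_mat B ** K"
  have M_mult: "M *v x = s_rf *s x - lift_mat A *v x - lift_mat B *v (K *v x)" for x
    by (simp add: M_def matrix_vector_mult_diff_rdistrib mat_mult_vec matrix_vector_mul_assoc)
  have M_inv: "M *v (matrix_inv M *v x) = x" "matrix_inv M *v (M *v x) = x" for x
    using invertible_matrix_inv[OF invertible]
    by (simp_all add: M_def matrix_vector_mul_assoc)
  have Phi_u_ones: "Phi_u A B K *v ones = K *v (matrix_inv M *v ones)"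
    by (simp add: Phi_u_def M_def matrix_vector_mul_assoc)
  have LA_ones: "lift_mat A *v ones = 0"
    using A_ones by (rule lift_mat_mult_ones_eq_0)
  have s_inverse: "s_rf * inverse s_rf = 1"
    using s_rf_nonzero by simp
  let ?u = "inverse s_rf *s (ones :: rfun^'n)"
  show ?thesis
  proof
    assume K_ones: "K *v ones = 0"
    have "M *v ?u = ones"
      by (simp add: M_mult K_ones LA_ones vector_scalar_commute vector_smult_assoc s_inverse
          mult.commute)
    then have "matrix_inv M *v ones = ?u"
      using M_inv(2) by metis
    then show "Phi_u A B K *v ones = 0"
      by (simp add: Phi_u_ones vector_scalar_commute K_ones)
  next
    assume "Phi_u A B K *v ones = 0"
    define v where "v = matrix_inv M *v ones"
    have Kv: "K *v v = 0"
      using \<open>Phi_u A B K *v ones = 0\<close> by (simp add: Phi_u_ones v_def)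
    have "s_rf *s v - lift_mat A *v v = ones"
      using M_inv(1)[of ones] by (simp add: M_mult Kv flip: v_def)
    then have "lift_mat A *v (v - ?u) = s_rf *s (v - ?u)"
      by (simp add: matrix_vector_mult_diff_distrib vector_scalar_commute LA_ones
          vector_ssub_ldistrib vector_smult_assoc s_inverse algebra_simps)
    then have "v = ?u"
      using lift_mat_eigenvector_s_rf_eq_0 by fastforce
    with Kv have "inverse s_rf *s (K *v ones) = 0"
      by (simp add: vector_scalar_commute)
    then show "K *v ones = 0"
      using s_rf_nonzero by simp
  qed
qed

theorem lemma4:
  fixes A :: "real^'n^'n" and B :: "real^'m^'n" and K :: "rfun^'n^'m"
  assumes "A *v ones = 0"
    and "rank B = CARD('m)"
    and "invertible (mat s_rf - lift_mat A - lift_mat B ** K)"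
  shows "(K *v ones = 0 \<longleftrightarrow> Phi_u A B K *v ones = 0)
    \<and> (\<forall>K' :: rfun^'n^'n.
          invertible (mat s_rf - lift_mat (0 :: real^'n^'n) - lift_mat (mat 1 :: real^'n^'n) ** K') \<longrightarrow>
          (K' *v ones = 0 \<longleftrightarrow> Phi_u 0 (mat 1) K' *v ones = 0))"
  using Phi_u_ones_eq_0_iff[OF assms(1,3)] Phi_u_ones_eq_0_iff[of "0 :: real^'n^'n" "mat 1"]
  by simp

end
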